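(* Let $(\Omega,\mathcal A)$ be a Borel space, $(\Omega,X_\bullet)$ a Borel field of proper CAT(0) spaces, and $B_\bullet$ a Borel subfield such that $B_\omega$ is a non-empty bounded subset of $X_\omega$ for every $\omega$. Then (i) the circumradius function $\omega\mapsto r(B_\omega)$ is Borel, and (ii) the section of circumcenters $\omega\mapsto c_{B_\omega}$ is a Borel section of $(\Omega,X_\bullet)$.
   Context: Borel field of metric spaces: $(X_\omega,d_\omega)_{\omega\in\Omega}$ metric spaces; a section is $x_\bullet=(x_\omega)$, $x_\omega\in X_\omega$. A Borel structure is a set $\mathcal L(\Omega,X_\bullet)$ of sections such that (a) $\omega\mapsto d_\omega(x_\omega,y_\omega)$ is Borel for all $x_\bullet,y_\bullet\in\mathcal L$; (b) any section $y_\bullet$ with $\omega\mapsto d_\omega(x_\omega,y_\omega)$ Borel for all $x_\bullet\in\mathcal L$ lies in $\mathcal L$; (c) there is a countable $\mathcal D=\{x^n_\bullet\}\subseteq\mathcal L$ (fundamental family) with $\{x^n_\omega\}_n$ dense in $X_\omega$ for all $\omega$; elements of $\mathcal L$ are Borel sections. For Borel $\Omega'$, $\mathcal L(\Omega',X_\bullet)$ = restrictions to $\Omega'$ of Borel sections. A subfield is $A_\bullet=(A_\omega)$ with $A_\omega\subseteq X_\omega$; it is Borel if $\Omega'=\{\omega:A_\omega\ne\emptyset\}\in\mathcal A$ and there are countably many $y^n_\bullet\in\mathcal L(\Omega',X_\bullet)$ with $y^n_\omega\in A_\omega$ and $A_\omega\subseteq\overline{\{y^n_\omega\}_n}$ for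 all $\omega\in\Omega'$. For a non-empty bounded $B$ in a complete CAT(0) space $X$, the circumradius is $r(B)=\inf\{r>0\mid\exists x\in X,\ B\subseteq\overline B(x,r)\}$ and the circumcenter $c_B$ is the unique point with $B\subseteq\overline B(c_B,r(B))$. *)

theory Defs
  imports "HOL-Analysis.Analysis"
begin

definition geodesic_seg :: "'a metric \<Rightarrow> 'a \<Rightarrow> 'a \<Rightarrow> (real \<Rightarrow> 'a) \<Rightarrow> bool" where
  "geodesic_seg X x y \<gamma> \<longleftrightarrow>
     \<gamma> 0 = x \<and> \<gamma> (mdist X x y) = y \<and>
     (\<forall>s\<in>{0..mdist X x y}. \<gamma> s \<in> mspace X) \<and>
     (\<forall>s\<in>{0..mdist X x y}. \<forall>t\<in>{0..mdist X x y}. mdist X (\<gamma> s) (\<gamma> t) = \<bar>s - t\<bar>)"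

definition geodesic_space :: "'a metric \<Rightarrow> bool" where
  "geodesic_space X \<longleftrightarrow> (\<forall>x\<in>mspace X. \<forall>y\<in>mspace X. \<exists>\<gamma>. geodesic_seg X x y \<gamma>)"

text \<open>Points of the side [x,y] (parametrised by \<gamma>) paired with their comparison points
  on the Euclidean segment [xb,yb] of the comparison triangle.\<close>
definition side_pairs :: "'a metric \<Rightarrow> 'a \<Rightarrow> 'a \<Rightarrow> (real \<Rightarrow> 'a) \<Rightarrow> (real^2) \<Rightarrow> (real^2) \<Rightarrow> ('a \<times> (real^2)) set" where
  "side_pairs X x y \<gamma> xb yb =
     {(\<gamma> s, xb + (s / mdist X x y) *\<^sub>R (yb - xb)) | s. s \<in> {0..mdist X x y}}"

definition CAT0 :: "'a metric \<Rightarrow> bool" where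
  "CAT0 X \<longleftrightarrow> geodesic_space X \<and>
     (\<forall>x\<in>mspace X. \<forall>y\<in>mspace X. \<forall>z\<in>mspace X. \<forall>\<gamma>1 \<gamma>2 \<gamma>3 xb yb zb.
        geodesic_seg X x y \<gamma>1 \<and> geodesic_seg X y z \<gamma>2 \<and> geodesic_seg X z x \<gamma>3 \<and>
        dist xb yb = mdist X x y \<and> dist yb zb = mdist X y z \<and> dist zb xb = mdist X z x \<longrightarrow>
        (let T = side_pairs X x y \<gamma>1 xb yb \<union> side_pairs X y z \<gamma>2 yb zb \<union> side_pairs X z x \<gamma>3 zb xb
         in \<forall>(p, pb)\<in>T. \<forall>(q, qb)\<in>T. mdist X p q \<le> dist pb qb))"

definition proper_metric :: "'a metric \<Rightarrow> bool" where
  "proper_metric X \<longleftrightarrow> (\<forall>x\<in>mspace X. \<forall>r. compactin (mtopology_of X) (mcball_of X x r))"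

definition mbounded_of :: "'a metric \<Rightarrow> 'a set \<Rightarrow> bool" where
  "mbounded_of X S \<longleftrightarrow> Metric_space.mbounded (mspace X) (mdist X) S"

definition circumradius :: "'a metric \<Rightarrow> 'a set \<Rightarrow> real" where
  "circumradius X B = Inf {r. r > 0 \<and> (\<exists>x\<in>mspace X. B \<subseteq> mcball_of X x r)}"

definition circumcenter :: "'a metric \<Rightarrow> 'a set \<Rightarrow> 'a" where
  "circumcenter X B = (THE c. c \<in> mspace X \<and> B \<subseteq> mcball_of X c (circumradius X B))"

definition is_section :: "'w measure \<Rightarrow> ('w \<Rightarrow> 'a metric) \<Rightarrow> ('w \<Rightarrow> 'a) \<Rightarrow> bool" where
  "is_section M X x \<longleftrightarrow> (\<forall>\<omega>\<in>space M. x \<omega> \<in> mspace (X \<omega>))"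

definition borel_structure :: "'w measure \<Rightarrow> ('w \<Rightarrow> 'a metric) \<Rightarrow> ('w \<Rightarrow> 'a) set \<Rightarrow> bool" where
  "borel_structure M X L \<longleftrightarrow>
     (\<forall>x\<in>L. is_section M X x) \<and>
     (\<forall>x\<in>L. \<forall>y\<in>L. (\<lambda>\<omega>. mdist (X \<omega>) (x \<omega>) (y \<omega>)) \<in> borel_measurable M) \<and>
     (\<forall>y. is_section M X y \<and> (\<forall>x\<in>L. (\<lambda>\<omega>. mdist (X \<omega>) (x \<omega>) (y \<omega>)) \<in> borel_measurable M)
          \<longrightarrow> y \<in> L) \<and>
     (\<exists>D :: nat \<Rightarrow> ('w \<Rightarrow> 'a). (\<forall>n. D n \<in> L) \<and>
        (\<forall>\<omega>\<in>space M. mspace (X \<omega>) \<subseteq> mtopology_of (X \<omega>) closure_of (range (\<lambda>n. D n \<omega>))))"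

text \<open>Borel subfield: \<Omega>' = {\<omega>. A \<omega> \<noteq> {}} is measurable and there are countably many sections in
  L(\<Omega>', X) (restrictions to \<Omega>' of Borel sections) with values in A \<omega> that are dense in A \<omega>.\<close>
definition borel_subfield :: "'w measure \<Rightarrow> ('w \<Rightarrow> 'a metric) \<Rightarrow> ('w \<Rightarrow> 'a) set \<Rightarrow> ('w \<Rightarrow> 'a set) \<Rightarrow> bool" where
  "borel_subfield M X L A \<longleftrightarrow>
     (\<forall>\<omega>\<in>space M. A \<omega> \<subseteq> mspace (X \<omega>)) \<and>
     {\<omega>\<in>space M. A \<omega> \<noteq> {}} \<in> sets M \<and>
     (\<exists>y :: nat \<Rightarrow> ('w \<Rightarrow> 'a). (\<forall>n. \<exists>z\<in>L. \<forall>\<omega>\<in>{\<omega>\<in>space M. A \<omega> \<noteq> {}}. y n \<omega> = z \<omega>) \<and>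
        (\<forall>\<omega>\<in>{\<omega>\<in>space M. A \<omega> \<noteq> {}}.
           (\<forall>n. y n \<omega> \<in> A \<omega>) \<and> A \<omega> \<subseteq> mtopology_of (X \<omega>) closure_of (range (\<lambda>n. y n \<omega>))))"

end

theory Submission
  imports Defs
begin

(*
  Fibrewise, the argument works with the radius function rad(p) = sup of d(p,b) over b in B:
  B lies in the closed ball of radius r around p iff rad(p) <= r, so the circumradius is
  R = inf rad.  Properness gives a minimiser c of rad, and the CAT(0) comparison inequality
  for midpoints (the CN inequality of Bruhat and Tits) gives the quantitative uniqueness
      d(p,c)^2 <= 2 (rad(p)^2 - R^2),
  so c is the circumcentre.  If (y n) is dense in B and (D k) is dense in X, this yields the
  countable formulas
      rad(p) = sup_n d(p, y n),    R = inf_k rad(D k),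
      d(x,c) = inf_j ( d(x, D j) + sqrt (2 (rad(D j)^2 - R^2)) ).
  Applied with Borel sections y and D, the right-hand sides are Borel in omega, which gives (i),
  and (ii) follows from the maximality axiom of the Borel structure.
*)

lemma dist_midpoint_squared:
  fixes P Q R :: "'v::real_inner"
  shows "(dist ((1/2) *\<^sub>R (P+Q)) R)^2 = (dist P R)^2/2 + (dist Q R)^2/2 - (dist P Q)^2/4"
proof -
  have half: "(1/2) *\<^sub>R R + (1/2) *\<^sub>R R = R"
    by (metis field_sum_of_halves scaleR_add_left scaleR_one)
  have e: "(1/2) *\<^sub>R (P+Q) - R = (1/2) *\<^sub>R ((P - R) + (Q - R))"
    using half by (simp add: algebra_simps)
  have f: "P - Q = (P - R) - (Q - R)" by simp
  show ?thesis unfolding dist_norm e f power2_norm_eq_inner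
    by (simp add: inner_add_left inner_add_right inner_diff_left inner_diff_right
        inner_commute algebra_simps field_simps)
qed

lemma comparison_triangle_exists:
  fixes a b c :: real
  assumes "0 \<le> a" "0 \<le> b" "0 \<le> c" "a \<le> b + c" "b \<le> a + c" "c \<le> a + b"
  shows "\<exists>P Q R::real^2. dist P Q = a \<and> dist Q R = b \<and> dist R P = c"
proof -
  define e1 :: "real^2" where "e1 = axis 1 1"
  define e2 :: "real^2" where "e2 = axis 2 1"
  have norm_coords: "norm (u *\<^sub>R e1 + v *\<^sub>R e2) = sqrt (u^2 + v^2)" for u v
    unfolding norm_eq_sqrt_inner e1_def e2_def
    by (simp add: inner_add_left inner_add_right inner_axis_axis power2_eq_square)
  show ?thesis
  proof (cases "a = 0")
    case True
    then have "b = c" using assms by linarith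
    then show ?thesis
      using norm_coords[of c 0] True assms
      by (intro exI[of _ 0] exI[of _ "c *\<^sub>R e1 + 0 *\<^sub>R e2"]) (simp add: dist_norm)
  next
    case False
    then have a_pos: "a > 0" using assms by simp
    text \<open>Place the triangle at 0, (a,0) and (u,v).\<close>
    define u where "u = (a^2 + c^2 - b^2) / (2*a)"
    have u_eq: "2*a*u = a^2 + c^2 - b^2" unfolding u_def using a_pos by simp
    have "(2*a*c)^2 - (a^2+c^2-b^2)^2 = (b^2-(a-c)^2)*((a+c)^2-b^2)"
      by (simp add: algebra_simps power2_eq_square)
    moreover have "b^2-(a-c)^2 \<ge> 0" "(a+c)^2-b^2 \<ge> 0"
      using assms by (simp_all add: abs_le_square_iff[symmetric] abs_le_iff)
    ultimately have "(2*a*u)^2 \<le> (2*a*c)^2"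
      using u_eq by (metis diff_ge_0_iff_ge zero_le_mult_iff)
    then have "(2*a)^2 * u^2 \<le> (2*a)^2 * c^2" by (simp add: power_mult_distrib)
    then have u_le: "u^2 \<le> c^2" using a_pos by simp
    define v where "v = sqrt (c^2 - u^2)"
    have v_sq: "v^2 = c^2 - u^2" unfolding v_def using u_le by simp
    show ?thesis
    proof (intro exI conjI)
      show "dist 0 (a *\<^sub>R e1 + 0 *\<^sub>R e2) = a"
        using norm_coords[of a 0] a_pos by (simp add: dist_norm)
      show "dist (u *\<^sub>R e1 + v *\<^sub>R e2) 0 = c"
        using norm_coords[of u v] v_sq assms by (simp add: dist_norm)
      have diff: "a *\<^sub>R e1 + 0 *\<^sub>R e2 - (u *\<^sub>R e1 + v *\<^sub>R e2) = (a - u) *\<^sub>R e1 + (- v) *\<^sub>R e2"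
        by (simp add: algebra_simps)
      have "(a-u)^2 + (-v)^2 = b^2" using v_sq u_eq by (simp add: algebra_simps power2_eq_square)
      then show "dist (a *\<^sub>R e1 + 0 *\<^sub>R e2) (u *\<^sub>R e1 + v *\<^sub>R e2) = b"
        unfolding dist_norm diff norm_coords using assms by simp
    qed
  qed
qed

section \<open>The CN inequality in CAT(0) spaces\<close>

text \<open>The midpoint m of a geodesic from p to q satisfies the inequality of Bruhat and Tits:
  d(b,m)^2 \<le> d(b,p)^2/2 + d(b,q)^2/2 - d(p,q)^2/4.  It is the comparison inequality for the
  pair (m, b) in the triangle p q b, combined with the Euclidean median formula.\<close>
lemma CAT0_CN_inequality:
  assumes cat: "CAT0 X" and p: "p \<in> mspace X" and q: "q \<in> mspace X"
  shows "\<exists>m\<in>mspace X. \<forall>b\<in>mspace X.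
           (mdist X b m)^2 \<le> (mdist X b p)^2/2 + (mdist X b q)^2/2 - (mdist X p q)^2/4"
proof -
  have geo: "geodesic_space X" using cat unfolding CAT0_def by blast
  obtain \<gamma> where g: "geodesic_seg X p q \<gamma>" using geo p q unfolding geodesic_space_def by blast
  define d where "d = mdist X p q"
  define m where "m = \<gamma> (d/2)"
  have d0: "d \<ge> 0" unfolding d_def by simp
  have mM: "m \<in> mspace X" using g d0 unfolding geodesic_seg_def m_def d_def by auto
  show ?thesis
  proof (intro bexI[OF _ mM] ballI)
    fix b assume b: "b \<in> mspace X"
    obtain \<gamma>2 where g2: "geodesic_seg X q b \<gamma>2" using geo q b unfolding geodesic_space_def by blast
    obtain \<gamma>3 where g3: "geodesic_seg X b p \<gamma>3" using geo b p unfolding geodesic_space_def by blast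
    have triangle: "mdist X p q \<le> mdist X q b + mdist X b p" "mdist X q b \<le> mdist X p q + mdist X b p"
      "mdist X b p \<le> mdist X p q + mdist X q b"
      using mdist_triangle[OF p b q] mdist_triangle[OF q p b] mdist_triangle[OF b q p]
      by (simp_all add: mdist_commute)
    obtain pb qb bb :: "real^2" where tri: "dist pb qb = mdist X p q"
        "dist qb bb = mdist X q b" "dist bb pb = mdist X b p"
      using comparison_triangle_exists[OF mdist_nonneg mdist_nonneg mdist_nonneg triangle] by blast
    define T where "T = side_pairs X p q \<gamma> pb qb \<union> side_pairs X q b \<gamma>2 qb bb \<union> side_pairs X b p \<gamma>3 bb pb"
    have comparison: "\<forall>(p', pb')\<in>T. \<forall>(q', qb')\<in>T. mdist X p' q' \<le> dist pb' qb'"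
      using cat p q b g g2 g3 tri unfolding CAT0_def T_def Let_def by blast
    define mb where "mb = pb + ((d/2) / mdist X p q) *\<^sub>R (qb - pb)"
    have m_pair: "(m, mb) \<in> T" unfolding T_def side_pairs_def m_def mb_def using d0 d_def by auto
    have "(\<gamma>3 0, bb + (0 / mdist X b p) *\<^sub>R (pb - bb)) \<in> side_pairs X b p \<gamma>3 bb pb"
      unfolding side_pairs_def by (auto intro!: exI[of _ 0])
    moreover have "\<gamma>3 0 = b" using g3 unfolding geodesic_seg_def by simp
    ultimately have b_pair: "(b, bb) \<in> T" unfolding T_def by simp
    have mb_midpoint: "mb = (1/2) *\<^sub>R (pb + qb)"
    proof (cases "d = 0")
      case True
      then have "pb = qb" using tri(1) d_def by simp
      then show ?thesis unfolding mb_def using True d_def by (simp add: scaleR_add_right[symmetric])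
    next
      case False
      have "(1/2) *\<^sub>R pb + (1/2) *\<^sub>R pb = pb"
        by (metis field_sum_of_halves scaleR_add_left scaleR_one)
      then show ?thesis unfolding mb_def using False d_def by (simp add: algebra_simps)
    qed
    have "(mdist X b m)^2 \<le> (dist mb bb)^2"
      using comparison m_pair b_pair by (fastforce simp: mdist_commute power_mono)
    also have "\<dots> = (dist pb bb)^2/2 + (dist qb bb)^2/2 - (dist pb qb)^2/4"
      unfolding mb_midpoint by (rule dist_midpoint_squared)
    also have "\<dots> = (mdist X b p)^2/2 + (mdist X b q)^2/2 - (mdist X p q)^2/4"
      using tri by (simp add: dist_commute mdist_commute)
    finally show "(mdist X b m)^2 \<le> (mdist X b p)^2/2 + (mdist X b q)^2/2 - (mdist X p q)^2/4" .
  qed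
qed

section \<open>Circumradius and circumcentre of a bounded set in a proper CAT(0) space\<close>

lemma closure_of_approx:
  assumes "p \<in> mtopology_of X closure_of S" "e > 0"
  shows "\<exists>s\<in>S. mdist X p s < e"
proof -
  interpret Metric_space "mspace X" "mdist X" by simp
  show ?thesis using assms unfolding mtopology_of_def metric_closure_of by auto
qed

locale bounded_set_in_CAT0 =
  fixes X :: "'a metric" and B :: "'a set"
  assumes cat: "CAT0 X" and proper: "proper_metric X"
    and B_sub: "B \<subseteq> mspace X" and B_ne: "B \<noteq> {}" and B_bdd: "mbounded_of X B"
begin

definition rad :: "'a \<Rightarrow> real" where
  "rad p = (SUP b\<in>B. mdist X p b)"

definition inf_rad :: real where
  "inf_rad = (INF p\<in>mspace X. rad p)"

lemma bdd_above_dist_B: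
  assumes p: "p \<in> mspace X"
  shows "bdd_above ((\<lambda>b. mdist X p b) ` B)"
proof -
  interpret Metric_space "mspace X" "mdist X" by simp
  obtain y0 K where y0: "y0 \<in> mspace X" and K: "\<forall>b\<in>B. mdist X y0 b \<le> K"
    using B_bdd B_ne unfolding mbounded_of_def mbounded by blast
  have "mdist X p b \<le> mdist X p y0 + K" if "b \<in> B" for b
    using mdist_triangle[OF p y0, of b] K that B_sub by force
  then show ?thesis by (intro bdd_aboveI) auto
qed

lemma rad_upper: "p \<in> mspace X \<Longrightarrow> b \<in> B \<Longrightarrow> mdist X p b \<le> rad p"
  unfolding rad_def using bdd_above_dist_B by (intro cSUP_upper) auto

lemma rad_least: "(\<And>b. b \<in> B \<Longrightarrow> mdist X p b \<le> K) \<Longrightarrow> rad p \<le> K"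
  unfolding rad_def using B_ne by (intro cSUP_least) auto

lemma rad_nonneg:
  assumes p: "p \<in> mspace X" shows "0 \<le> rad p"
proof -
  obtain b where b: "b \<in> B" using B_ne by blast
  show ?thesis using rad_upper[OF p b] mdist_nonneg[of X p b] by linarith
qed

lemma rad_lipschitz:
  assumes p: "p \<in> mspace X" and q: "q \<in> mspace X"
  shows "rad p \<le> rad q + mdist X p q"
proof (rule rad_least)
  fix b assume b: "b \<in> B"
  show "mdist X p b \<le> rad q + mdist X p q"
    using mdist_triangle[OF p q, of b] rad_upper[OF q b] b B_sub by auto
qed

lemma B_subset_mcball_iff:
  assumes p: "p \<in> mspace X"
  shows "B \<subseteq> mcball_of X p r \<longleftrightarrow> rad p \<le> r"
proof
  assume "B \<subseteq> mcball_of X p r"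
  then show "rad p \<le> r" by (intro rad_least) (auto simp: in_mcball_of)
next
  assume "rad p \<le> r"
  then show "B \<subseteq> mcball_of X p r"
    using rad_upper[OF p] p B_sub by (fastforce simp: in_mcball_of)
qed

lemma bdd_below_rad: "bdd_below (rad ` mspace X)"
  using rad_nonneg by (intro bdd_belowI[of _ 0]) auto

lemma inf_rad_le: "p \<in> mspace X \<Longrightarrow> inf_rad \<le> rad p"
  unfolding inf_rad_def using bdd_below_rad by (intro cINF_lower) auto

lemma inf_rad_nonneg: "0 \<le> inf_rad"
  unfolding inf_rad_def using B_ne B_sub rad_nonneg by (intro cINF_greatest) auto

text \<open>By the Lipschitz property, rad is lower semicontinuous along convergent sequences.\<close>
lemma rad_limit_le:
  assumes lim: "limitin (mtopology_of X) s l sequentially"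
    and s: "\<And>n. s n \<in> mspace X"
    and bound: "\<And>e. e > 0 \<Longrightarrow> \<exists>N. \<forall>n\<ge>N. rad (s n) \<le> K + e"
  shows "rad l \<le> K"
proof (rule field_le_epsilon)
  fix e :: real assume e: "e > 0"
  interpret Metric_space "mspace X" "mdist X" by simp
  have l: "l \<in> mspace X" using lim unfolding mtopology_of_def by (simp add: limitin_mspace)
  have e2: "e/2 > 0" using e by simp
  then have "\<exists>N. \<forall>n\<ge>N. s n \<in> mspace X \<and> mdist X (s n) l < e/2"
    using lim unfolding mtopology_of_def limit_metric_sequentially by blast
  then obtain N1 where N1: "\<And>n. n \<ge> N1 \<Longrightarrow> mdist X (s n) l < e/2" by blast
  obtain N2 where N2: "\<And>n. n \<ge> N2 \<Longrightarrow> rad (s n) \<le> K + e/2" using bound[OF e2] by blast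
  define n where "n = max N1 N2"
  have "rad l \<le> rad (s n) + mdist X l (s n)" by (rule rad_lipschitz[OF l s])
  then show "rad l \<le> K + e"
    using N1[of n] N2[of n] unfolding n_def by (simp add: mdist_commute)
qed

text \<open>In a proper space rad attains its infimum: a minimising sequence stays in a closed ball
  around a point of B, which is compact.\<close>
lemma rad_minimiser_exists: "\<exists>c\<in>mspace X. rad c = inf_rad"
proof -
  interpret Metric_space "mspace X" "mdist X" by simp
  have "\<exists>p\<in>mspace X. rad p < inf_rad + inverse (real (Suc n))" for n
    using cINF_less_iff[OF _ bdd_below_rad, of "inf_rad + inverse (real (Suc n))"]
    using B_ne B_sub unfolding inf_rad_def by auto
  then obtain \<sigma> where \<sigma>: "\<And>n. \<sigma> n \<in> mspace X"
    and \<sigma>_rad: "\<And>n. rad (\<sigma> n) < inf_rad + inverse (real (Suc n))" by metis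
  obtain b0 where b0: "b0 \<in> B" using B_ne by blast
  have "mdist X b0 (\<sigma> n) \<le> inf_rad + 1" for n
  proof -
    have "inverse (real (Suc n)) \<le> 1" by (simp add: inverse_le_1_iff)
    then show ?thesis
      using rad_upper[OF \<sigma> b0, of n] \<sigma>_rad[of n] by (simp add: mdist_commute)
  qed
  then have "range \<sigma> \<subseteq> mcball b0 (inf_rad + 1)" using \<sigma> b0 B_sub by auto
  moreover have "compactin mtopology (mcball b0 (inf_rad + 1))"
    using proper b0 B_sub unfolding proper_metric_def mtopology_of_def mcball_of_def by blast
  ultimately obtain l r where l: "l \<in> mspace X" and r: "strict_mono r"
    and lim: "limitin mtopology (\<sigma> \<circ> r) l sequentially"
    unfolding compactin_sequentially by blast
  have "rad l \<le> inf_rad"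
  proof (rule rad_limit_le)
    show "limitin (mtopology_of X) (\<sigma> \<circ> r) l sequentially" using lim by (simp add: mtopology_of_def)
    show "(\<sigma> \<circ> r) n \<in> mspace X" for n using \<sigma> by simp
    fix e :: real assume e: "e > 0"
    obtain N where N: "inverse (real (Suc N)) < e"
      using reals_Archimedean[OF e] by blast
    have "rad ((\<sigma> \<circ> r) n) \<le> inf_rad + e" if "n \<ge> N" for n
    proof -
      have "N \<le> r n" using seq_suble[OF r, of n] that by simp
      then have "inverse (real (Suc (r n))) \<le> inverse (real (Suc N))"
        by (simp add: le_imp_inverse_le)
      then have "rad (\<sigma> (r n)) < inf_rad + e" using \<sigma>_rad[of "r n"] N by linarith
      then show ?thesis by simp
    qed
    then show "\<exists>N. \<forall>n\<ge>N. rad ((\<sigma> \<circ> r) n) \<le> inf_rad + e" by blast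
  qed
  then show ?thesis using l inf_rad_le[OF l] by force
qed

text \<open>Quantitative uniqueness of the minimiser, from the CN inequality applied to the midpoint
  of c and p: every point of B is within sqrt(rad(p)^2/2 + R^2/2 - d(p,c)^2/4) of that midpoint.\<close>
lemma dist_minimiser_squared:
  assumes c: "c \<in> mspace X" "rad c \<le> inf_rad" and p: "p \<in> mspace X"
  shows "(mdist X p c)^2 \<le> 2 * ((rad p)^2 - inf_rad^2)"
proof -
  obtain m where m: "m \<in> mspace X" and CN: "\<And>b. b \<in> mspace X \<Longrightarrow>
      (mdist X b m)^2 \<le> (mdist X b p)^2/2 + (mdist X b c)^2/2 - (mdist X p c)^2/4"
    using CAT0_CN_inequality[OF cat p c(1)] by blast
  define Q where "Q = (rad p)^2/2 + inf_rad^2/2 - (mdist X p c)^2/4"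
  have Q_bound: "(mdist X m b)^2 \<le> Q" if b: "b \<in> B" for b
  proof -
    have bM: "b \<in> mspace X" using b B_sub by auto
    have "(mdist X b p)^2 \<le> (rad p)^2" "(mdist X b c)^2 \<le> inf_rad^2"
      using rad_upper[OF p b] rad_upper[OF c(1) b] c(2)
      by (simp_all add: mdist_commute power_mono)
    then show ?thesis using CN[OF bM] unfolding Q_def by (simp add: mdist_commute)
  qed
  obtain b0 where "b0 \<in> B" using B_ne by blast
  then have Q_nonneg: "0 \<le> Q" using Q_bound[of b0] zero_le_power2 order_trans by blast
  have "rad m \<le> sqrt Q" by (rule rad_least) (simp add: Q_bound real_le_rsqrt)
  then have "inf_rad \<le> sqrt Q" using inf_rad_le[OF m] by linarith
  then have "inf_rad^2 \<le> Q" using inf_rad_nonneg Q_nonneg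
    by (metis power_mono real_sqrt_pow2)
  then show ?thesis unfolding Q_def by simp
qed

lemma circumradius_eq: "circumradius X B = inf_rad"
proof -
  obtain c where c: "c \<in> mspace X" "rad c = inf_rad" using rad_minimiser_exists by blast
  have "(\<exists>x\<in>mspace X. B \<subseteq> mcball_of X x r) \<longleftrightarrow> inf_rad \<le> r" for r
    using c B_subset_mcball_iff inf_rad_le order_trans by (metis order_refl)
  then have "{r. r > 0 \<and> (\<exists>x\<in>mspace X. B \<subseteq> mcball_of X x r)} = {r. r > 0 \<and> inf_rad \<le> r}"
    by simp
  also have "Inf \<dots> = inf_rad"
  proof (cases "inf_rad = 0")
    case True
    then have "{r. r > 0 \<and> inf_rad \<le> r} = {0<..}" by auto
    then show ?thesis using True by simp
  next
    case False
    then have "{r. r > 0 \<and> inf_rad \<le> r} = {inf_rad..}" using inf_rad_nonneg by auto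
    then show ?thesis by simp
  qed
  finally show ?thesis unfolding circumradius_def .
qed

lemma circumcenter_minimises: "circumcenter X B \<in> mspace X \<and> rad (circumcenter X B) = inf_rad"
proof -
  obtain c where c: "c \<in> mspace X" "rad c = inf_rad" using rad_minimiser_exists by blast
  have "circumcenter X B = c"
    unfolding circumcenter_def circumradius_eq
  proof (rule the_equality)
    show "c \<in> mspace X \<and> B \<subseteq> mcball_of X c inf_rad" using c B_subset_mcball_iff by auto
  next
    fix c' assume c': "c' \<in> mspace X \<and> B \<subseteq> mcball_of X c' inf_rad"
    then have "rad c' \<le> inf_rad" using B_subset_mcball_iff by auto
    then have "(rad c')^2 \<le> inf_rad^2" using rad_nonneg c' by (simp add: power_mono)
    then have "2 * ((rad c')^2 - inf_rad^2) \<le> 0" by simp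
    moreover have "(mdist X c' c)^2 \<le> 2 * ((rad c')^2 - inf_rad^2)"
      using dist_minimiser_squared[of c c'] c c' by simp
    ultimately have "(mdist X c' c)^2 \<le> 0" by linarith
    then have "mdist X c' c = 0" by simp
    then show "c' = c" using c c' by simp
  qed
  then show ?thesis using c by simp
qed

lemma bdd_above_dist_seq:
  assumes p: "p \<in> mspace X" and y_B: "\<And>n. y n \<in> B"
  shows "bdd_above (range (\<lambda>n. mdist X p (y n)))"
  by (rule bdd_above_mono[OF bdd_above_dist_B[OF p]]) (auto simp: y_B)

lemma rad_eq_SUP_dense:
  assumes p: "p \<in> mspace X" and y_B: "\<And>n. y n \<in> B"
    and y_dense: "B \<subseteq> mtopology_of X closure_of range y"
  shows "rad p = (SUP n. mdist X p (y n))"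
proof (rule antisym)
  show "rad p \<le> (SUP n. mdist X p (y n))"
  proof (rule rad_least, rule field_le_epsilon)
    fix b and e :: real assume b: "b \<in> B" and e: "e > 0"
    obtain n where n: "mdist X b (y n) < e"
      using closure_of_approx[OF subsetD[OF y_dense b] e] by blast
    have "mdist X p b \<le> mdist X p (y n) + mdist X (y n) b"
      using mdist_triangle[OF p, of "y n" b] y_B b B_sub by auto
    moreover have "mdist X p (y n) \<le> (SUP n. mdist X p (y n))"
      using bdd_above_dist_seq[of p y] p y_B by (intro cSUP_upper) auto
    ultimately show "mdist X p b \<le> (SUP n. mdist X p (y n)) + e"
      using n by (simp add: mdist_commute)
  qed
  show "(SUP n. mdist X p (y n)) \<le> rad p"
    using rad_upper[OF p y_B] by (intro cSUP_least) auto
qed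

lemma inf_rad_eq_INF_dense:
  assumes D: "\<And>k. D k \<in> mspace X" and D_dense: "mspace X \<subseteq> mtopology_of X closure_of range D"
  shows "inf_rad = (INF k. rad (D k))"
proof (rule antisym)
  show "inf_rad \<le> (INF k. rad (D k))" using inf_rad_le[OF D] by (intro cINF_greatest) auto
  show "(INF k. rad (D k)) \<le> inf_rad"
  proof (rule field_le_epsilon)
    fix e :: real assume e: "e > 0"
    define c where "c = circumcenter X B"
    have c: "c \<in> mspace X" "rad c = inf_rad" using circumcenter_minimises unfolding c_def by auto
    obtain k where k: "mdist X c (D k) < e"
      using closure_of_approx[OF subsetD[OF D_dense c(1)] e] by blast
    have "(INF k. rad (D k)) \<le> rad (D k)"
      using rad_nonneg[OF D] by (intro cINF_lower bdd_belowI[of _ 0]) auto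
    also have "\<dots> \<le> rad c + mdist X (D k) c" by (rule rad_lipschitz[OF D c(1)])
    finally show "(INF k. rad (D k)) \<le> inf_rad + e" using c k by (simp add: mdist_commute)
  qed
qed

lemma rad_squared_excess:
  assumes q: "q \<in> mspace X"
  shows "(rad q)^2 - inf_rad^2 \<le> (2 * inf_rad + mdist X (circumcenter X B) q) * mdist X (circumcenter X B) q"
proof -
  define c where "c = circumcenter X B"
  have c: "c \<in> mspace X" "rad c = inf_rad" using circumcenter_minimises unfolding c_def by auto
  have "rad q \<le> inf_rad + mdist X c q"
    using rad_lipschitz[OF q c(1)] c(2) by (simp add: mdist_commute)
  then have "(rad q)^2 \<le> (inf_rad + mdist X c q)^2" using rad_nonneg[OF q] by (simp add: power_mono)
  then show ?thesis unfolding c_def[symmetric] by (simp add: power2_eq_square algebra_simps)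
qed

lemma dist_circumcenter_eq_INF_dense:
  assumes x: "x \<in> mspace X"
    and D: "\<And>k. D k \<in> mspace X" and D_dense: "mspace X \<subseteq> mtopology_of X closure_of range D"
  shows "mdist X x (circumcenter X B) =
           (INF j. mdist X x (D j) + sqrt (2 * ((rad (D j))^2 - inf_rad^2)))"
proof -
  define c where "c = circumcenter X B"
  have c: "c \<in> mspace X" "rad c = inf_rad" using circumcenter_minimises unfolding c_def by auto
  define t where "t j = mdist X x (D j) + sqrt (2 * ((rad (D j))^2 - inf_rad^2))" for j
  have lower: "mdist X x c \<le> t j" for j
  proof -
    have "mdist X (D j) c \<le> sqrt (2 * ((rad (D j))^2 - inf_rad^2))"
      using dist_minimiser_squared[OF c(1) _ D] c(2) by (simp add: real_le_rsqrt)
    then show ?thesis using mdist_triangle[OF x D[of j] c(1)] unfolding t_def by linarith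
  qed
  have "(INF j. t j) \<le> mdist X x c"
  proof (rule field_le_epsilon)
    fix e :: real assume e: "e > 0"
    define \<delta> where "\<delta> = min 1 (min (e/2) (e^2 / (8 * (2 * inf_rad + 1))))"
    have \<delta>: "\<delta> > 0" unfolding \<delta>_def using e inf_rad_nonneg by auto
    obtain j where j: "mdist X c (D j) < \<delta>"
      using closure_of_approx[OF subsetD[OF D_dense c(1)] \<delta>] by blast
    define d where "d = mdist X c (D j)"
    have d: "0 \<le> d" "d \<le> 1" "d \<le> e/2" "d \<le> e^2 / (8 * (2 * inf_rad + 1))"
      using j unfolding d_def \<delta>_def by auto
    have "(rad (D j))^2 - inf_rad^2 \<le> (2 * inf_rad + d) * d"
      using rad_squared_excess[OF D] unfolding d_def c_def .
    also have "\<dots> \<le> (2 * inf_rad + 1) * d"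
      using d inf_rad_nonneg by (intro mult_right_mono) auto
    also have "\<dots> \<le> (2 * inf_rad + 1) * (e^2 / (8 * (2 * inf_rad + 1)))"
      using d inf_rad_nonneg by (intro mult_left_mono) auto
    also have "\<dots> = e^2/8" using inf_rad_nonneg by (simp add: field_simps)
    finally have "2 * ((rad (D j))^2 - inf_rad^2) \<le> (e/2)^2" by (simp add: power_divide)
    then have "sqrt (2 * ((rad (D j))^2 - inf_rad^2)) \<le> e/2" using e by (intro real_le_lsqrt) auto
    moreover have "mdist X x (D j) \<le> mdist X x c + d"
      unfolding d_def by (rule mdist_triangle[OF x c(1) D])
    moreover have "(INF j. t j) \<le> t j" using lower by (intro cINF_lower bdd_belowI) auto
    ultimately show "(INF j. t j) \<le> mdist X x c + e" using d(3) unfolding t_def by linarith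
  qed
  moreover have "mdist X x c \<le> (INF j. t j)" using lower by (intro cINF_greatest) auto
  ultimately show ?thesis unfolding t_def c_def by linarith
qed

end

section \<open>Borel fields of proper CAT(0) spaces\<close>

lemma borel_structure_fundamental_family:
  fixes M :: "'w measure" and X :: "'w \<Rightarrow> 'a metric" and L :: "('w \<Rightarrow> 'a) set"
  assumes field: "borel_structure M X L"
  obtains D :: "nat \<Rightarrow> 'w \<Rightarrow> 'a" where "\<And>k. D k \<in> L"
    "\<And>\<omega>. \<omega> \<in> space M \<Longrightarrow> mspace (X \<omega>) \<subseteq> mtopology_of (X \<omega>) closure_of range (\<lambda>k. D k \<omega>)"
proof -
  have "\<exists>D :: nat \<Rightarrow> 'w \<Rightarrow> 'a. (\<forall>k. D k \<in> L) \<and>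
          (\<forall>\<omega>\<in>space M. mspace (X \<omega>) \<subseteq> mtopology_of (X \<omega>) closure_of range (\<lambda>k. D k \<omega>))"
    using field unfolding borel_structure_def by (elim conjE)
  then obtain D :: "nat \<Rightarrow> 'w \<Rightarrow> 'a" where D: "(\<forall>k. D k \<in> L) \<and>
      (\<forall>\<omega>\<in>space M. mspace (X \<omega>) \<subseteq> mtopology_of (X \<omega>) closure_of range (\<lambda>k. D k \<omega>))" ..
  then show ?thesis by (intro that[of D]) auto
qed

lemma borel_subfield_dense_sections:
  fixes M :: "'w measure" and X :: "'w \<Rightarrow> 'a metric" and L :: "('w \<Rightarrow> 'a) set"
  assumes sub: "borel_subfield M X L B" and ne: "\<forall>\<omega>\<in>space M. B \<omega> \<noteq> {}"
  obtains y :: "nat \<Rightarrow> 'w \<Rightarrow> 'a" where "\<And>n. y n \<in> L" "\<And>\<omega> n. \<omega> \<in> space M \<Longrightarrow> y n \<omega> \<in> B \<omega>"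
    "\<And>\<omega>. \<omega> \<in> space M \<Longrightarrow> B \<omega> \<subseteq> mtopology_of (X \<omega>) closure_of range (\<lambda>n. y n \<omega>)"
proof -
  have full: "{\<omega>\<in>space M. B \<omega> \<noteq> {}} = space M" using ne by auto
  have "\<exists>y' :: nat \<Rightarrow> 'w \<Rightarrow> 'a. (\<forall>n. \<exists>z\<in>L. \<forall>\<omega>\<in>space M. y' n \<omega> = z \<omega>) \<and>
          (\<forall>\<omega>\<in>space M. (\<forall>n. y' n \<omega> \<in> B \<omega>) \<and>
             B \<omega> \<subseteq> mtopology_of (X \<omega>) closure_of range (\<lambda>n. y' n \<omega>))"
    using sub unfolding borel_subfield_def full by (elim conjE)
  then obtain y' :: "nat \<Rightarrow> 'w \<Rightarrow> 'a"
    where y': "(\<forall>n. \<exists>z\<in>L. \<forall>\<omega>\<in>space M. y' n \<omega> = z \<omega>) \<and>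
          (\<forall>\<omega>\<in>space M. (\<forall>n. y' n \<omega> \<in> B \<omega>) \<and>
             B \<omega> \<subseteq> mtopology_of (X \<omega>) closure_of range (\<lambda>n. y' n \<omega>))" ..
  have "\<forall>n. \<exists>z. z \<in> L \<and> (\<forall>\<omega>\<in>space M. y' n \<omega> = z \<omega>)" using y' by blast
  then obtain y where y: "\<forall>n. y n \<in> L \<and> (\<forall>\<omega>\<in>space M. y' n \<omega> = y n \<omega>)"
    by (rule choice[THEN exE])
  have "range (\<lambda>n. y' n \<omega>) = range (\<lambda>n. y n \<omega>)" if "\<omega> \<in> space M" for \<omega>
    using y that by simp
  then show ?thesis
    using y y'[THEN conjunct2] by (intro that[of y]) auto
qed

locale CAT0_field_with_dense_sections =
  fixes M :: "'w measure" and X :: "'w \<Rightarrow> 'a metric" and L :: "('w \<Rightarrow> 'a) set"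
    and B :: "'w \<Rightarrow> 'a set" and D :: "nat \<Rightarrow> 'w \<Rightarrow> 'a" and y :: "nat \<Rightarrow> 'w \<Rightarrow> 'a"
  assumes field: "borel_structure M X L"
    and fibres: "\<And>\<omega>. \<omega> \<in> space M \<Longrightarrow> bounded_set_in_CAT0 (X \<omega>) (B \<omega>)"
    and D_L: "\<And>k. D k \<in> L"
    and D_dense: "\<And>\<omega>. \<omega> \<in> space M \<Longrightarrow> mspace (X \<omega>) \<subseteq> mtopology_of (X \<omega>) closure_of range (\<lambda>k. D k \<omega>)"
    and y_L: "\<And>n. y n \<in> L"
    and y_B: "\<And>\<omega> n. \<omega> \<in> space M \<Longrightarrow> y n \<omega> \<in> B \<omega>"
    and y_dense: "\<And>\<omega>. \<omega> \<in> space M \<Longrightarrow> B \<omega> \<subseteq> mtopology_of (X \<omega>) closure_of range (\<lambda>n. y n \<omega>)"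
begin

lemma L_in_mspace: "x \<in> L \<Longrightarrow> \<omega> \<in> space M \<Longrightarrow> x \<omega> \<in> mspace (X \<omega>)"
  using field unfolding borel_structure_def is_section_def by blast

lemma L_maximal:
  "is_section M X s \<Longrightarrow> (\<And>x. x \<in> L \<Longrightarrow> (\<lambda>\<omega>. mdist (X \<omega>) (x \<omega>) (s \<omega>)) \<in> borel_measurable M)
    \<Longrightarrow> s \<in> L"
  using field unfolding borel_structure_def by blast

lemma L_dist_measurable:
  "x \<in> L \<Longrightarrow> x' \<in> L \<Longrightarrow> (\<lambda>\<omega>. mdist (X \<omega>) (x \<omega>) (x' \<omega>)) \<in> borel_measurable M"
  using field unfolding borel_structure_def by blast

text \<open>The fibrewise radius function evaluated along D k is Borel, being a countable supremum
  of Borel distance functions.\<close>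
lemma rad_D_measurable:
  "(\<lambda>\<omega>. bounded_set_in_CAT0.rad (X \<omega>) (B \<omega>) (D k \<omega>)) \<in> borel_measurable M"
proof (rule measurable_cong[THEN iffD1, rotated])
  show "(\<lambda>\<omega>. SUP n. mdist (X \<omega>) (D k \<omega>) (y n \<omega>)) \<in> borel_measurable M"
  proof (rule borel_measurable_cSUP)
    fix \<omega> assume \<omega>: "\<omega> \<in> space M"
    interpret bounded_set_in_CAT0 "X \<omega>" "B \<omega>" by (rule fibres[OF \<omega>])
    show "bdd_above ((\<lambda>n. mdist (X \<omega>) (D k \<omega>) (y n \<omega>)) ` UNIV)"
      by (rule bdd_above_dist_seq[OF L_in_mspace[OF D_L \<omega>] y_B[OF \<omega>]])
  qed (use L_dist_measurable[OF D_L y_L] in auto)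
  fix \<omega> assume \<omega>: "\<omega> \<in> space M"
  interpret bounded_set_in_CAT0 "X \<omega>" "B \<omega>" by (rule fibres[OF \<omega>])
  show "(SUP n. mdist (X \<omega>) (D k \<omega>) (y n \<omega>)) = rad (D k \<omega>)"
    using rad_eq_SUP_dense[OF L_in_mspace[OF D_L \<omega>] y_B[OF \<omega>] y_dense[OF \<omega>]] by simp
qed

lemma inf_rad_measurable: "(\<lambda>\<omega>. bounded_set_in_CAT0.inf_rad (X \<omega>) (B \<omega>)) \<in> borel_measurable M"
proof (rule measurable_cong[THEN iffD1, rotated])
  show "(\<lambda>\<omega>. INF k. bounded_set_in_CAT0.rad (X \<omega>) (B \<omega>) (D k \<omega>)) \<in> borel_measurable M"
    using rad_D_measurable by (intro borel_measurable_cINF_real) auto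
  fix \<omega> assume \<omega>: "\<omega> \<in> space M"
  interpret bounded_set_in_CAT0 "X \<omega>" "B \<omega>" by (rule fibres[OF \<omega>])
  show "(INF k. rad (D k \<omega>)) = inf_rad"
    using inf_rad_eq_INF_dense[OF L_in_mspace[OF D_L \<omega>] D_dense[OF \<omega>]] by simp
qed

theorem circumradius_measurable: "(\<lambda>\<omega>. circumradius (X \<omega>) (B \<omega>)) \<in> borel_measurable M"
  using inf_rad_measurable
  by (rule measurable_cong[THEN iffD1, rotated]) (simp add: bounded_set_in_CAT0.circumradius_eq[OF fibres])

text \<open>Distances from Borel sections to the circumcentres are Borel, so by the maximality
  axiom of a Borel structure the circumcentres form a Borel section.\<close>
theorem circumcenter_borel_section: "(\<lambda>\<omega>. circumcenter (X \<omega>) (B \<omega>)) \<in> L"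
proof -
  have "(\<lambda>\<omega>. mdist (X \<omega>) (x \<omega>) (circumcenter (X \<omega>) (B \<omega>))) \<in> borel_measurable M"
    if x: "x \<in> L" for x
  proof -
    note [measurable] = L_dist_measurable[OF x D_L] rad_D_measurable inf_rad_measurable
    show ?thesis
    proof (rule measurable_cong[THEN iffD1, rotated])
      show "(\<lambda>\<omega>. INF j. mdist (X \<omega>) (x \<omega>) (D j \<omega>)
              + sqrt (2 * ((bounded_set_in_CAT0.rad (X \<omega>) (B \<omega>) (D j \<omega>))^2
                           - (bounded_set_in_CAT0.inf_rad (X \<omega>) (B \<omega>))^2))) \<in> borel_measurable M"
        by (intro borel_measurable_cINF_real) measurable
      fix \<omega> assume \<omega>: "\<omega> \<in> space M"
      interpret bounded_set_in_CAT0 "X \<omega>" "B \<omega>" by (rule fibres[OF \<omega>])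
      show "(INF j. mdist (X \<omega>) (x \<omega>) (D j \<omega>) + sqrt (2 * ((rad (D j \<omega>))^2 - inf_rad^2)))
            = mdist (X \<omega>) (x \<omega>) (circumcenter (X \<omega>) (B \<omega>))"
        using dist_circumcenter_eq_INF_dense[OF L_in_mspace[OF x \<omega>] L_in_mspace[OF D_L \<omega>] D_dense[OF \<omega>]]
        by simp
    qed
  qed
  moreover have "is_section M X (\<lambda>\<omega>. circumcenter (X \<omega>) (B \<omega>))"
    using bounded_set_in_CAT0.circumcenter_minimises[OF fibres] unfolding is_section_def by blast
  ultimately show ?thesis by (intro L_maximal)
qed

end

theorem mainTheorem8:
  fixes M :: "'w measure" and X :: "'w \<Rightarrow> 'a metric" and L :: "('w \<Rightarrow> 'a) set"
    and B :: "'w \<Rightarrow> 'a set"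
  assumes field: "borel_structure M X L"
    and proper: "\<forall>\<omega>\<in>space M. proper_metric (X \<omega>) \<and> CAT0 (X \<omega>)"
    and subfield: "borel_subfield M X L B"
    and ne_bdd: "\<forall>\<omega>\<in>space M. B \<omega> \<noteq> {} \<and> mbounded_of (X \<omega>) (B \<omega>)"
  shows "(\<lambda>\<omega>. circumradius (X \<omega>) (B \<omega>)) \<in> borel_measurable M \<and>
         (\<lambda>\<omega>. circumcenter (X \<omega>) (B \<omega>)) \<in> L"
proof -
  obtain D :: "nat \<Rightarrow> 'w \<Rightarrow> 'a" where D_L: "\<And>k. D k \<in> L"
    and D_dense: "\<And>\<omega>. \<omega> \<in> space M \<Longrightarrow> mspace (X \<omega>) \<subseteq> mtopology_of (X \<omega>) closure_of range (\<lambda>k. D k \<omega>)"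
    by (rule borel_structure_fundamental_family[OF field]) (rule that)
  have ne: "\<forall>\<omega>\<in>space M. B \<omega> \<noteq> {}" using ne_bdd by blast
  obtain y :: "nat \<Rightarrow> 'w \<Rightarrow> 'a" where y_L: "\<And>n. y n \<in> L"
    and y_B: "\<And>\<omega> n. \<omega> \<in> space M \<Longrightarrow> y n \<omega> \<in> B \<omega>"
    and y_dense: "\<And>\<omega>. \<omega> \<in> space M \<Longrightarrow> B \<omega> \<subseteq> mtopology_of (X \<omega>) closure_of range (\<lambda>n. y n \<omega>)"
    by (rule borel_subfield_dense_sections[OF subfield ne]) (rule that)
  have fibres: "bounded_set_in_CAT0 (X \<omega>) (B \<omega>)" if \<omega>: "\<omega> \<in> space M" for \<omega>
  proof
    show "B \<omega> \<subseteq> mspace (X \<omega>)" using subfield \<omega> unfolding borel_subfield_def by blast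
  qed (use proper ne_bdd \<omega> in auto)
  interpret CAT0_field_with_dense_sections M X L B D y
    by (rule CAT0_field_with_dense_sections.intro[OF field fibres D_L D_dense y_L y_B y_dense])
  show ?thesis using circumradius_measurable circumcenter_borel_section by blast
qed

end
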